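(* Let $V$ be a reflexive Banach space, $X$ a Hilbert space, $C\subset V$, $K\colon C\to 2^C$ with nonempty closed convex values, $A\colon V\to V^*$, $f\in V^*$, $\varphi\colon V\to\mathbb{R}$ convex, $M\colon V\to X$ linear and bounded with adjoint $M^*$, and $j\colon X\to\mathbb{R}$ locally Lipschitz. Then $u\in C$ satisfies $u\in K(u)$ and $$\langle Au-f,z-u\rangle+\varphi(z)-\varphi(u)+j^0(Mu;Mz-Mu)\ge0\quad\forall z\in K(u)$$ if and only if $u\in C$, $u\in K(u)$, and there exists $w\in\partial j(Mu)$ such that $$\langle Au-f,z-u\rangle+\varphi(z)-\varphi(u)+\langle M^*w,z-u\rangle\ge0\quad\forall z\in K(u).$$
   Context: $j^0(x;v)=\limsup_{y\to x,\lambda\downarrow0}\frac{j(y+\lambda v)-j(y)}{\lambda}$ is the Clarke generalized directional derivative, and $\partial j(x)=\{\xi\in X:\langle\xi,v\rangle_X\le j^0(x;v)\ \forall v\in X\}$ is the Clarke subgradient. *)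

theory Defs
  imports "HOL-Analysis.Analysis"
begin

definition reflexive_space :: "'v::banach itself \<Rightarrow> bool" where
  "reflexive_space _ \<longleftrightarrow>
     (\<forall>\<Phi> :: ('v \<Rightarrow>\<^sub>L real) \<Rightarrow>\<^sub>L real. \<exists>x::'v. \<forall>l. blinfun_apply \<Phi> l = blinfun_apply l x)"

definition locally_lipschitz :: "('x::metric_space \<Rightarrow> real) \<Rightarrow> bool" where
  "locally_lipschitz j \<longleftrightarrow>
     (\<forall>x. \<exists>e>0. \<exists>L. \<forall>y\<in>ball x e. \<forall>z\<in>ball x e. \<bar>j y - j z\<bar> \<le> L * dist y z)"

definition clarke_dd :: "('x::real_normed_vector \<Rightarrow> real) \<Rightarrow> 'x \<Rightarrow> 'x \<Rightarrow> real" where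
  "clarke_dd j x v =
     real_of_ereal (Limsup (nhds x \<times>\<^sub>F at_right (0::real))
        (\<lambda>(y, t). ereal ((j (y + t *\<^sub>R v) - j y) / t)))"

text \<open>Clarke subgradient in a Hilbert space X (dual identified with X via the inner product).\<close>
definition clarke_subdiff :: "('x::real_inner \<Rightarrow> real) \<Rightarrow> 'x \<Rightarrow> 'x set" where
  "clarke_subdiff j x = {\<xi>. \<forall>v. inner \<xi> v \<le> clarke_dd j x v}"

definition adjoint_op :: "('v::real_normed_vector \<Rightarrow>\<^sub>L 'x::real_inner) \<Rightarrow> 'x \<Rightarrow> ('v \<Rightarrow>\<^sub>L real)" where
  "adjoint_op M w = Blinfun (\<lambda>v. inner w (blinfun_apply M v))"

end

theory Submission
  imports Defs
begin

text \<open>For fixed \<open>u\<close> put \<open>\<psi>(z) = \<langle>Au - f, z - u\<rangle> + \<phi>(z) - \<phi>(u)\<close>, a convex function on the convex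
  set \<open>K(u)\<close>, and \<open>p = j\<^sup>0(Mu; \<cdot>)\<close>. Since \<open>j\<close> is locally Lipschitz, \<open>p\<close> is finite, sublinear and
  bounded by \<open>L\<parallel>\<cdot>\<parallel>\<close>. The hypothesis says \<open>\<psi>(z) + p(Mz - Mu) \<ge> 0\<close> on \<open>K(u)\<close>; a Hahn--Banach
  sandwich argument in the Hilbert space \<open>X \<times> \<real>\<close> then yields a continuous linear functional
  \<open>(w, \<cdot>) \<le> p\<close> with \<open>\<psi>(z) + (w, Mz - Mu) \<ge> 0\<close>, and \<open>(w, \<cdot>) \<le> p\<close> says precisely
  \<open>w \<in> \<partial>j(Mu)\<close>. The separating functional is obtained by projecting \<open>(0, -1)\<close> onto the closure of
  a convex cone built from the epigraph of \<open>p\<close> and the epigraph of \<open>\<psi>\<close>.\<close>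

section \<open>Nearest points in Hilbert spaces\<close>

lemma parallelogram_law:
  fixes x y :: "'a::real_inner"
  shows "norm (x + y)^2 + norm (x - y)^2 = 2 * norm x ^ 2 + 2 * norm y ^ 2"
  by (simp add: power2_norm_eq_inner inner_add_left inner_add_right inner_diff_left
      inner_diff_right inner_commute)

lemma norm_diff_sq_le_infdist:
  fixes S :: "'a::real_inner set"
  assumes "convex S" "x \<in> S" "y \<in> S"
  shows "norm (x - y)^2 \<le> 2 * dist a x ^ 2 + 2 * dist a y ^ 2 - 4 * infdist a S ^ 2"
proof -
  have "(1/2) *\<^sub>R x + (1/2) *\<^sub>R y \<in> S"
    using assms by (intro convexD) auto
  then have "infdist a S \<le> norm (a - ((1/2) *\<^sub>R x + (1/2) *\<^sub>R y))"
    by (metis infdist_le dist_norm)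
  also have "a - ((1/2) *\<^sub>R x + (1/2) *\<^sub>R y) = (1/2) *\<^sub>R ((a - x) + (a - y))"
    by (simp add: algebra_simps flip: scaleR_add_left)
  finally have "(2 * infdist a S)^2 \<le> norm ((a - x) + (a - y))^2"
    by (intro power_mono) (auto simp: infdist_nonneg)
  moreover have "norm ((a - x) + (a - y))^2 + norm (x - y)^2 = 2 * dist a x ^ 2 + 2 * dist a y ^ 2"
    using parallelogram_law[of "a - x" "a - y"]
    by (simp add: dist_norm norm_minus_commute[of y x])
  ultimately show ?thesis
    by (simp add: power_mult_distrib)
qed

lemma hilbert_closest_point_exists:
  fixes S :: "'a::{real_inner,complete_space} set"
  assumes "closed S" "convex S" "S \<noteq> {}"
  obtains P where "P \<in> S" "\<And>e. e \<in> S \<Longrightarrow> dist a P \<le> dist a e"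
proof -
  define d where "d = infdist a S"
  have "d \<in> closure ((\<lambda>y. dist a y) ` S)"
    unfolding d_def infdist_notempty[OF assms(3)]
    using assms(3) by (intro closure_contains_Inf) (auto intro: bdd_belowI[of _ 0])
  then obtain r where r_in: "\<And>n. r n \<in> (\<lambda>y. dist a y) ` S" and r: "r \<longlonglongrightarrow> d"
    unfolding closure_sequential by blast
  have "\<forall>n. \<exists>y. y \<in> S \<and> r n = dist a y"
    using r_in by blast
  then obtain x where xS: "\<And>n. x n \<in> S" and r_eq: "\<And>n. r n = dist a (x n)"
    by (metis choice)
  have "r = (\<lambda>n. dist a (x n))"
    using r_eq by auto
  with r have lim: "(\<lambda>n. dist a (x n)) \<longlonglongrightarrow> d"
    by simp
  have "(\<lambda>n. 2 * dist a (x n)^2 - 2 * d^2) \<longlonglongrightarrow> 2 * d^2 - 2 * d^2"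
    by (intro tendsto_intros lim)
  then have excess: "(\<lambda>n. 2 * dist a (x n)^2 - 2 * d^2) \<longlonglongrightarrow> 0"
    by simp
  have "Cauchy x"
  proof (rule CauchyI)
    fix e :: real
    assume e: "0 < e"
    then obtain N where N: "\<And>n. N \<le> n \<Longrightarrow> 2 * dist a (x n)^2 - 2 * d^2 < e^2 / 2"
      using order_tendstoD(2)[OF excess, of "e^2 / 2"] by (auto simp: eventually_sequentially)
    have "norm (x m - x n) < e" if "N \<le> m" "N \<le> n" for m n
    proof -
      have "norm (x m - x n)^2 < e^2"
        using norm_diff_sq_le_infdist[OF assms(2) xS xS, of m n a] N[OF that(1)] N[OF that(2)]
        by (simp add: d_def)
      then show ?thesis
        using e by (simp add: power_less_imp_less_base)
    qed
    then show "\<exists>M. \<forall>m\<ge>M. \<forall>n\<ge>M. norm (x m - x n) < e"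
      by blast
  qed
  then obtain P where P: "x \<longlonglongrightarrow> P"
    by (auto simp: Cauchy_convergent_iff convergent_def)
  have "P \<in> S"
    using closed_sequentially[OF assms(1) _ P] xS by blast
  moreover have "dist a P = d"
    using LIMSEQ_unique[OF tendsto_dist[OF tendsto_const P] lim] .
  ultimately show thesis
    using that by (simp add: d_def infdist_le)
qed

lemma closest_point_inner_le:
  fixes S :: "'a::real_inner set"
  assumes "convex S" "P \<in> S" "\<And>e. e \<in> S \<Longrightarrow> dist a P \<le> dist a e" "e \<in> S"
  shows "inner (a - P) (e - P) \<le> 0"
proof (rule ccontr)
  define q where "q = inner (a - P) (e - P)"
  define r where "r = norm (e - P)^2"
  assume "\<not> inner (a - P) (e - P) \<le> 0"
  then have q: "q > 0"
    by (simp add: q_def)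
  then have r: "r > 0"
    by (auto simp: r_def q_def)
  define s where "s = min 1 (q / r)"
  have s: "0 < s" "s \<le> 1" "s * r \<le> q"
    using q r by (auto simp: s_def min_def field_simps)
  have "(1 - s) *\<^sub>R P + s *\<^sub>R e \<in> S"
    using assms s by (intro convexD) auto
  then have "norm (a - P) \<le> norm (a - ((1 - s) *\<^sub>R P + s *\<^sub>R e))"
    using assms(3) by (simp add: dist_norm)
  also have "a - ((1 - s) *\<^sub>R P + s *\<^sub>R e) = (a - P) - s *\<^sub>R (e - P)"
    by (simp add: algebra_simps)
  finally have "norm (a - P)^2 \<le> norm ((a - P) - s *\<^sub>R (e - P))^2"
    by (intro power_mono) auto
  also have "\<dots> = norm (a - P)^2 - 2 * s * q + s * (s * r)"
    by (simp add: power2_norm_eq_inner inner_diff_left inner_diff_right inner_commute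
        q_def r_def algebra_simps)
  finally have "2 * s * q \<le> s * (s * r)"
    by simp
  moreover have "s * (s * r) \<le> s * q"
    using s by (intro mult_left_mono) auto
  moreover have "0 < s * q"
    using s q by simp
  ultimately show False
    by linarith
qed

lemma convex_cone_separation:
  fixes E :: "'a::{real_inner,complete_space} set"
  assumes "convex E" "0 \<in> E" and cone: "\<And>e s. e \<in> E \<Longrightarrow> 0 < s \<Longrightarrow> s *\<^sub>R e \<in> E"
    and "a \<notin> closure E"
  obtains n where "\<And>e. e \<in> E \<Longrightarrow> inner n e \<le> 0" "0 < inner n a"
proof -
  obtain P where P: "P \<in> closure E" and closest: "\<And>e. e \<in> closure E \<Longrightarrow> dist a P \<le> dist a e"
    using hilbert_closest_point_exists[of "closure E" a] assms(1,2) by (auto simp: convex_closure)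
  define n where "n = a - P"
  have var: "inner n (e - P) \<le> 0" if "e \<in> closure E" for e
    unfolding n_def by (rule closest_point_inner_le[OF convex_closure[OF assms(1)] P closest that])
  have "n \<noteq> 0"
    using assms(4) P by (auto simp: n_def)
  have nP: "0 \<le> inner n P"
    using var[of 0] assms(2) closure_subset by auto
  have "inner n a = inner n n + inner n P"
    by (simp add: n_def inner_diff_right inner_diff_left)
  with \<open>n \<noteq> 0\<close> nP have "0 < inner n a"
    by (simp add: add_pos_nonneg)
  moreover have "inner n e \<le> 0" if "e \<in> E" for e
  proof (rule ccontr)
    assume "\<not> inner n e \<le> 0"
    then have pos: "0 < inner n e"
      by simp
    define s where "s = (inner n P + 1) / inner n e"
    have "0 < s"
      using pos nP by (simp add: s_def)
    then have "inner n (s *\<^sub>R e - P) \<le> 0"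
      using var cone that closure_subset by blast
    moreover have "inner n (s *\<^sub>R e) = inner n P + 1"
      using pos by (simp add: s_def)
    ultimately show False
      by (simp add: inner_diff_right)
  qed
  ultimately show thesis
    using that by blast
qed

section \<open>Sublinear functionals and the sandwich theorem\<close>

lemma convex_conic_combination:
  assumes "convex G" "x1 \<in> G" "x2 \<in> G" "0 \<le> a" "0 \<le> b"
  obtains x where "x \<in> G" "(a + b) *\<^sub>R x = a *\<^sub>R x1 + b *\<^sub>R x2"
proof (cases "a + b = 0")
  case True
  with assms have "a = 0" "b = 0"
    by auto
  then show thesis
    using that[of x1] assms by simp
next
  case False
  then have "(a / (a + b)) *\<^sub>R x1 + (b / (a + b)) *\<^sub>R x2 \<in> G"
    using assms by (intro convexD) (auto simp: add_divide_distrib[symmetric])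
  moreover have "(a + b) *\<^sub>R ((a / (a + b)) *\<^sub>R x1 + (b / (a + b)) *\<^sub>R x2) = a *\<^sub>R x1 + b *\<^sub>R x2"
    using False by (simp add: scaleR_add_right)
  ultimately show thesis
    using that by blast
qed

locale sublinear =
  fixes p :: "'a::real_normed_vector \<Rightarrow> real"
  assumes subadditive: "p (a + b) \<le> p a + p b"
    and pos_homogeneous: "0 \<le> s \<Longrightarrow> p (s *\<^sub>R a) = s * p a"

context sublinear
begin

lemma zero [simp]: "p 0 = 0"
  using pos_homogeneous[of 0 0] by simp

lemma convex_combination_le:
  "0 \<le> a \<Longrightarrow> 0 \<le> b \<Longrightarrow> p (a *\<^sub>R x + b *\<^sub>R y) \<le> a * p x + b * p y"
  using subadditive[of "a *\<^sub>R x" "b *\<^sub>R y"] by (simp add: pos_homogeneous)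

text \<open>\<open>sandwich_cone G\<close> is the Minkowski sum of the epigraph of \<open>p\<close> and the cone generated by
  the reflected set \<open>{(-y, r). (y, r) \<in> G}\<close>; separating \<open>(0, -1)\<close> from it yields the sandwiched
  linear functional.\<close>
definition sandwich_cone :: "('a \<times> real) set \<Rightarrow> ('a \<times> real) set" where
  "sandwich_cone G = {(v, s). \<exists>t\<ge>0. \<exists>(y, r)\<in>G. p (v + t *\<^sub>R y) + t * r \<le> s}"

lemma epigraph_in_sandwich_cone:
  assumes "G \<noteq> {}" "p v \<le> s"
  shows "(v, s) \<in> sandwich_cone G"
  using assms by (force simp: sandwich_cone_def)

lemma reflection_in_sandwich_cone:
  assumes "(y, r) \<in> G"
  shows "(- y, r) \<in> sandwich_cone G"
  using assms by (force simp: sandwich_cone_def intro!: exI[of _ 1])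

lemma sandwich_cone_scaleR:
  assumes "e \<in> sandwich_cone G" "0 < c"
  shows "c *\<^sub>R e \<in> sandwich_cone G"
proof -
  obtain v s t y r where e: "e = (v, s)" and t: "0 \<le> t" and yr: "(y, r) \<in> G"
    and le: "p (v + t *\<^sub>R y) + t * r \<le> s"
    using assms(1) by (auto simp: sandwich_cone_def)
  have "p (c *\<^sub>R v + (c * t) *\<^sub>R y) + (c * t) * r = c * (p (v + t *\<^sub>R y) + t * r)"
    using assms(2) by (simp add: pos_homogeneous[symmetric] scaleR_add_right algebra_simps)
  also have "\<dots> \<le> c * s"
    using assms(2) le by simp
  finally have "p (c *\<^sub>R v + (c * t) *\<^sub>R y) + (c * t) * r \<le> c * s" .
  then show ?thesis
    unfolding e sandwich_cone_def using assms(2) t yr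
    by (auto intro!: exI[of _ "c * t"] bexI[of _ "(y, r)"])
qed

lemma convex_sandwich_cone:
  assumes "convex G"
  shows "convex (sandwich_cone G)"
proof (rule convexI)
  fix e1 e2 and \<alpha> \<beta> :: real
  assume "e1 \<in> sandwich_cone G" "e2 \<in> sandwich_cone G" and \<alpha>\<beta>: "0 \<le> \<alpha>" "0 \<le> \<beta>" "\<alpha> + \<beta> = 1"
  then obtain v1 s1 t1 y1 r1 v2 s2 t2 y2 r2 where e: "e1 = (v1, s1)" "e2 = (v2, s2)"
    and t: "0 \<le> t1" "0 \<le> t2" and G: "(y1, r1) \<in> G" "(y2, r2) \<in> G"
    and le1: "p (v1 + t1 *\<^sub>R y1) + t1 * r1 \<le> s1"
    and le2: "p (v2 + t2 *\<^sub>R y2) + t2 * r2 \<le> s2"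
    by (auto simp: sandwich_cone_def)
  obtain y r where yr: "(y, r) \<in> G"
    and comb: "(\<alpha> * t1 + \<beta> * t2) *\<^sub>R (y, r) = (\<alpha> * t1) *\<^sub>R (y1, r1) + (\<beta> * t2) *\<^sub>R (y2, r2)"
    using convex_conic_combination[OF assms G] \<alpha>\<beta> t by (metis mult_nonneg_nonneg prod.collapse)
  define t where "t = \<alpha> * t1 + \<beta> * t2"
  have vec: "\<alpha> *\<^sub>R v1 + \<beta> *\<^sub>R v2 + t *\<^sub>R y = \<alpha> *\<^sub>R (v1 + t1 *\<^sub>R y1) + \<beta> *\<^sub>R (v2 + t2 *\<^sub>R y2)"
    and real: "t * r = \<alpha> * (t1 * r1) + \<beta> * (t2 * r2)"
    using comb by (simp_all add: t_def algebra_simps)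
  have "p (\<alpha> *\<^sub>R v1 + \<beta> *\<^sub>R v2 + t *\<^sub>R y) + t * r
      \<le> \<alpha> * (p (v1 + t1 *\<^sub>R y1) + t1 * r1) + \<beta> * (p (v2 + t2 *\<^sub>R y2) + t2 * r2)"
    using convex_combination_le[OF \<alpha>\<beta>(1,2), of "v1 + t1 *\<^sub>R y1" "v2 + t2 *\<^sub>R y2"]
    unfolding vec real by (simp add: ring_distribs)
  also have "\<dots> \<le> \<alpha> * s1 + \<beta> * s2"
    using le1 le2 \<alpha>\<beta> by (intro add_mono mult_left_mono) auto
  finally show "\<alpha> *\<^sub>R e1 + \<beta> *\<^sub>R e2 \<in> sandwich_cone G"
    using yr t \<alpha>\<beta> by (auto simp: e sandwich_cone_def t_def intro!: exI[of _ t] bexI[of _ "(y, r)"])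
qed

lemma sandwich_cone_lower_bound:
  assumes bound: "\<And>v. p v \<le> L * norm v" and above: "\<And>y r. (y, r) \<in> G \<Longrightarrow> 0 \<le> r + p y"
  shows "sandwich_cone G \<subseteq> {e. - (L * norm (fst e)) \<le> snd e}"
proof clarify
  fix v s
  assume "(v, s) \<in> sandwich_cone G"
  then obtain t y r where t: "0 \<le> t" and yr: "(y, r) \<in> G" and le: "p (v + t *\<^sub>R y) + t * r \<le> s"
    by (auto simp: sandwich_cone_def)
  have "t * p y \<le> p (v + t *\<^sub>R y) + p (- v)"
    using subadditive[of "v + t *\<^sub>R y" "- v"] pos_homogeneous[OF t] by simp
  moreover have "0 \<le> t * (r + p y)"
    using t above[OF yr] by simp
  moreover have "p (- v) \<le> L * norm v"
    using bound[of "- v"] by simp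
  ultimately show "- (L * norm (fst (v, s))) \<le> snd (v, s)"
    using le by (simp add: algebra_simps)
qed

end

lemma sublinear_sandwich:
  fixes p :: "'x::{real_inner,complete_space} \<Rightarrow> real" and G :: "('x \<times> real) set"
  assumes "sublinear p" and bound: "\<And>v. p v \<le> L * norm v"
    and "convex G" "G \<noteq> {}" and above: "\<And>y r. (y, r) \<in> G \<Longrightarrow> 0 \<le> r + p y"
  obtains w where "\<And>v. inner w v \<le> p v" "\<And>y r. (y, r) \<in> G \<Longrightarrow> 0 \<le> r + inner w y"
proof -
  interpret sublinear p by fact
  have "closed {e :: 'x \<times> real. - (L * norm (fst e)) \<le> snd e}"
    by (intro closed_Collect_le continuous_intros)
  then have "(0, -1) \<notin> closure (sandwich_cone G)"
    using closure_minimal[OF sandwich_cone_lower_bound[OF bound above]] by force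
  moreover have "0 \<in> sandwich_cone G"
    using epigraph_in_sandwich_cone[OF assms(4), of 0 0] by (simp add: zero_prod_def)
  ultimately obtain n where n: "\<And>e. e \<in> sandwich_cone G \<Longrightarrow> inner n e \<le> 0"
    and "0 < inner n (0, -1)"
    using convex_cone_separation[OF convex_sandwich_cone[OF assms(3)] _ sandwich_cone_scaleR] by blast
  then have n2: "snd n < 0"
    by (simp add: inner_prod_def)
  define w where "w = (- 1 / snd n) *\<^sub>R fst n"
  have "inner w v \<le> p v" for v
    using n[OF epigraph_in_sandwich_cone[OF assms(4) order.refl, of v]] n2
    by (simp add: w_def inner_prod_def field_simps)
  moreover have "0 \<le> r + inner w y" if "(y, r) \<in> G" for y r
    using n[OF reflection_in_sandwich_cone[OF that]] n2
    by (simp add: w_def inner_prod_def field_simps)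
  ultimately show thesis
    using that by blast
qed

section \<open>The Clarke directional derivative\<close>

lemma Limsup_real_bounded:
  fixes g :: "'a \<Rightarrow> real"
  assumes "F \<noteq> bot" "eventually (\<lambda>z. \<bar>g z\<bar> \<le> B) F"
  obtains r where "Limsup F (\<lambda>z. ereal (g z)) = ereal r" "\<bar>r\<bar> \<le> B"
proof -
  have "Limsup F (\<lambda>z. ereal (g z)) \<le> ereal B"
    by (rule Limsup_bounded) (use assms(2) in \<open>auto elim!: eventually_mono\<close>)
  moreover have "ereal (- B) \<le> Limsup F (\<lambda>z. ereal (g z))"
    by (rule le_Limsup[OF assms(1)]) (use assms(2) in \<open>auto elim!: eventually_mono\<close>)
  ultimately show thesis
    using that by (cases "Limsup F (\<lambda>z. ereal (g z))") auto
qed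

lemma real_Limsup_le:
  fixes g :: "'a \<Rightarrow> real"
  assumes "F \<noteq> bot" "eventually (\<lambda>z. \<bar>g z\<bar> \<le> B) F"
    and less: "\<And>y. c < y \<Longrightarrow> eventually (\<lambda>z. g z < y) F"
  shows "real_of_ereal (Limsup F (\<lambda>z. ereal (g z))) \<le> c"
proof -
  obtain r where r: "Limsup F (\<lambda>z. ereal (g z)) = ereal r"
    using Limsup_real_bounded[OF assms(1,2)] .
  have "Limsup F (\<lambda>z. ereal (g z)) \<le> ereal c"
    unfolding Limsup_le_iff
  proof (intro allI impI)
    fix y :: ereal
    assume "ereal c < y"
    then show "\<forall>\<^sub>F z in F. ereal (g z) < y"
      using less by (cases y) (auto elim!: eventually_mono)
  qed
  then show ?thesis
    using r by simp
qed

lemma eventually_less_real_Limsup: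
  fixes g :: "'a \<Rightarrow> real"
  assumes "F \<noteq> bot" "eventually (\<lambda>z. \<bar>g z\<bar> \<le> B) F"
    and "real_of_ereal (Limsup F (\<lambda>z. ereal (g z))) < y"
  shows "eventually (\<lambda>z. g z < y) F"
proof -
  obtain r where r: "Limsup F (\<lambda>z. ereal (g z)) = ereal r"
    using Limsup_real_bounded[OF assms(1,2)] .
  then have "Limsup F (\<lambda>z. ereal (g z)) < ereal y"
    using assms(3) by simp
  then show ?thesis
    using Limsup_le_iff[THEN iffD1, OF order.refl] by fastforce
qed

abbreviation clarke_filter :: "'x::real_normed_vector \<Rightarrow> ('x \<times> real) filter" where
  "clarke_filter x \<equiv> nhds x \<times>\<^sub>F at_right 0"

definition clarke_quotient :: "('x::real_normed_vector \<Rightarrow> real) \<Rightarrow> 'x \<Rightarrow> 'x \<times> real \<Rightarrow> real" where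
  "clarke_quotient j v z = (j (fst z + snd z *\<^sub>R v) - j (fst z)) / snd z"

lemma clarke_dd_eq_Limsup:
  "clarke_dd j x v = real_of_ereal (Limsup (clarke_filter x) (\<lambda>z. ereal (clarke_quotient j v z)))"
  by (simp add: clarke_dd_def clarke_quotient_def case_prod_unfold)

lemma clarke_filter_ne_bot: "clarke_filter x \<noteq> bot"
  by (simp add: prod_filter_eq_bot)

lemma filterlim_clarke_filter_shift:
  "filterlim (\<lambda>z. (fst z + snd z *\<^sub>R v, snd z)) (clarke_filter x) (clarke_filter x)"
proof -
  have t: "filterlim snd (at_right 0) (clarke_filter x)"
    by (rule filterlim_snd)
  then have "((\<lambda>z. fst z + snd z *\<^sub>R v) \<longlongrightarrow> x + 0 *\<^sub>R v) (clarke_filter x)"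
    by (intro tendsto_intros filterlim_fst filterlim_mono[OF t at_within_le_nhds order.refl])
  then show ?thesis
    using t by (simp add: filterlim_Pair)
qed

lemma filterlim_clarke_filter_scale:
  assumes "0 < s"
  shows "filterlim (\<lambda>z. (fst z, s * snd z)) (clarke_filter x) (clarke_filter x)"
proof -
  have t: "filterlim snd (at_right 0) (clarke_filter x)"
    by (rule filterlim_snd)
  have "((\<lambda>z. s * snd z) \<longlongrightarrow> s * 0) (clarke_filter x)"
    by (intro tendsto_intros filterlim_mono[OF t at_within_le_nhds order.refl])
  moreover have "eventually (\<lambda>z. 0 < s * snd z) (clarke_filter x)"
    using filterlim_iff[THEN iffD1, OF t, rule_format, OF eventually_at_right_less] assms
    by (auto elim!: eventually_mono)
  ultimately have "filterlim (\<lambda>z. s * snd z) (at_right 0) (clarke_filter x)"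
    by (intro tendsto_imp_filterlim_at_right) auto
  then show ?thesis
    by (simp add: filterlim_Pair filterlim_fst)
qed

lemma clarke_quotient_bounded:
  assumes "locally_lipschitz j"
  obtains L where "0 \<le> L"
    "\<And>v. eventually (\<lambda>z. \<bar>clarke_quotient j v z\<bar> \<le> L * norm v) (clarke_filter x)"
proof -
  obtain e L where e: "0 < e" and L: "\<And>y z. y \<in> ball x e \<Longrightarrow> z \<in> ball x e \<Longrightarrow> \<bar>j y - j z\<bar> \<le> L * dist y z"
    using assms unfolding locally_lipschitz_def by blast
  have "eventually (\<lambda>z. \<bar>clarke_quotient j v z\<bar> \<le> \<bar>L\<bar> * norm v) (clarke_filter x)" for v
  proof -
    have "((\<lambda>t. t * norm v) \<longlongrightarrow> 0 * norm v) (at_right 0)"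
      by (intro tendsto_intros)
    then have "eventually (\<lambda>t. t * norm v < e / 2) (at_right 0)"
      using e by (intro order_tendstoD(2)) auto
    then have small: "eventually (\<lambda>t. 0 < t \<and> t * norm v < e / 2) (at_right 0)"
      using eventually_at_right_less eventually_conj by blast
    have near: "eventually (\<lambda>y. dist x y < e / 2) (nhds x)"
      using e by (intro eventually_nhds_metric[THEN iffD2] exI[of _ "e / 2"]) (auto simp: dist_commute)
    show ?thesis
      using eventually_prodI[OF near small]
    proof eventually_elim
      case (elim z)
      obtain y t where z: "z = (y, t)" and y: "dist x y < e / 2" and t: "0 < t" "t * norm v < e / 2"
        using elim by (cases z) auto
      have "dist x (y + t *\<^sub>R v) \<le> dist x y + t * norm v"
        using dist_triangle[of x "y + t *\<^sub>R v" y] t by (simp add: dist_norm)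
      then have "y \<in> ball x e" "y + t *\<^sub>R v \<in> ball x e"
        using y t e by auto
      then have "\<bar>j (y + t *\<^sub>R v) - j y\<bar> \<le> L * (t * norm v)"
        using L t by (fastforce simp: dist_norm)
      also have "\<dots> \<le> \<bar>L\<bar> * (t * norm v)"
        using t by (intro mult_right_mono) auto
      finally show ?case
        using t by (simp add: z clarke_quotient_def abs_divide divide_le_eq algebra_simps)
    qed
  qed
  then show thesis
    using that[of "\<bar>L\<bar>"] by simp
qed

lemma clarke_dd_abs_le:
  assumes "locally_lipschitz j"
  obtains L where "\<And>v. \<bar>clarke_dd j x v\<bar> \<le> L * norm v"
proof -
  obtain L where "\<And>v. eventually (\<lambda>z. \<bar>clarke_quotient j v z\<bar> \<le> L * norm v) (clarke_filter x)"
    using clarke_quotient_bounded[OF assms] by blast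
  then have "\<bar>clarke_dd j x v\<bar> \<le> L * norm v" for v
    using Limsup_real_bounded[OF clarke_filter_ne_bot] by (metis clarke_dd_eq_Limsup real_of_ereal.simps(1))
  then show thesis
    using that by blast
qed

lemma clarke_dd_leI:
  assumes "locally_lipschitz j"
    and "\<And>y. c < y \<Longrightarrow> eventually (\<lambda>z. clarke_quotient j v z < y) (clarke_filter x)"
  shows "clarke_dd j x v \<le> c"
proof -
  obtain L where "eventually (\<lambda>z. \<bar>clarke_quotient j v z\<bar> \<le> L * norm v) (clarke_filter x)"
    using clarke_quotient_bounded[OF assms(1)] by blast
  from real_Limsup_le[OF clarke_filter_ne_bot this assms(2)] show ?thesis
    by (simp add: clarke_dd_eq_Limsup)
qed

lemma eventually_clarke_quotient_less:
  assumes "locally_lipschitz j" "clarke_dd j x v < y"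
  shows "eventually (\<lambda>z. clarke_quotient j v z < y) (clarke_filter x)"
proof -
  obtain L where "eventually (\<lambda>z. \<bar>clarke_quotient j v z\<bar> \<le> L * norm v) (clarke_filter x)"
    using clarke_quotient_bounded[OF assms(1)] by blast
  from eventually_less_real_Limsup[OF clarke_filter_ne_bot this] show ?thesis
    using assms(2) by (simp add: clarke_dd_eq_Limsup)
qed

lemma clarke_dd_add_le:
  assumes "locally_lipschitz j"
  shows "clarke_dd j x (v + w) \<le> clarke_dd j x v + clarke_dd j x w"
proof (rule clarke_dd_leI[OF assms])
  fix y
  assume y: "clarke_dd j x v + clarke_dd j x w < y"
  define e where "e = (y - clarke_dd j x v - clarke_dd j x w) / 2"
  have "0 < e"
    using y by (simp add: e_def)
  then have ev_v: "eventually (\<lambda>z. clarke_quotient j v z < clarke_dd j x v + e) (clarke_filter x)"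
    and ev_w: "eventually (\<lambda>z. clarke_quotient j w z < clarke_dd j x w + e) (clarke_filter x)"
    by (simp_all add: eventually_clarke_quotient_less[OF assms])
  note ev_shifted = filterlim_iff[THEN iffD1, OF filterlim_clarke_filter_shift[of v x], rule_format, OF ev_w]
  show "eventually (\<lambda>z. clarke_quotient j (v + w) z < y) (clarke_filter x)"
    using ev_v ev_shifted
  proof eventually_elim
    case (elim z)
    \<comment> \<open>the quotient of a sum telescopes through the shifted base point \<open>y + t v\<close>\<close>
    have "clarke_quotient j (v + w) z = clarke_quotient j v z + clarke_quotient j w (fst z + snd z *\<^sub>R v, snd z)"
      by (simp add: clarke_quotient_def scaleR_add_right add.assoc add_divide_distrib[symmetric])
    moreover have "clarke_dd j x v + e + (clarke_dd j x w + e) = y"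
      by (simp add: e_def)
    ultimately show ?case
      using elim by linarith
  qed
qed

lemma clarke_dd_scaleR_le:
  assumes "locally_lipschitz j" "0 < s"
  shows "clarke_dd j x (s *\<^sub>R v) \<le> s * clarke_dd j x v"
proof (rule clarke_dd_leI[OF assms(1)])
  fix y
  assume "s * clarke_dd j x v < y"
  then have "clarke_dd j x v < y / s"
    using assms(2) by (simp add: field_simps)
  from filterlim_iff[THEN iffD1, OF filterlim_clarke_filter_scale[OF assms(2)], rule_format,
      OF eventually_clarke_quotient_less[OF assms(1) this]]
  show "eventually (\<lambda>z. clarke_quotient j (s *\<^sub>R v) z < y) (clarke_filter x)"
  proof eventually_elim
    case (elim z)
    have "clarke_quotient j (s *\<^sub>R v) z = s * clarke_quotient j v (fst z, s * snd z)"
      using assms(2) by (simp add: clarke_quotient_def mult.commute)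
    with elim assms(2) show ?case
      by (simp add: field_simps)
  qed
qed

lemma sublinear_clarke_dd:
  assumes "locally_lipschitz j"
  shows "sublinear (clarke_dd j x)"
proof
  fix v w :: 'a
  show "clarke_dd j x (v + w) \<le> clarke_dd j x v + clarke_dd j x w"
    by (rule clarke_dd_add_le[OF assms])
next
  fix s :: real and v :: 'a
  assume "0 \<le> s"
  show "clarke_dd j x (s *\<^sub>R v) = s * clarke_dd j x v"
  proof (cases "s = 0")
    case True
    obtain L where "\<And>v. \<bar>clarke_dd j x v\<bar> \<le> L * norm v"
      using clarke_dd_abs_le[OF assms] by blast
    from this[of 0] True show ?thesis
      by simp
  next
    case False
    with \<open>0 \<le> s\<close> have s: "0 < s"
      by simp
    have "clarke_dd j x v = clarke_dd j x (inverse s *\<^sub>R (s *\<^sub>R v))"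
      using s by simp
    also have "\<dots> \<le> inverse s * clarke_dd j x (s *\<^sub>R v)"
      using s by (intro clarke_dd_scaleR_le[OF assms]) simp
    finally show ?thesis
      using clarke_dd_scaleR_le[OF assms s, of x v] s by (simp add: field_simps)
  qed
qed

section \<open>Clarke variational inequalities\<close>

lemma adjoint_op_apply: "blinfun_apply (adjoint_op M w) v = inner w (blinfun_apply M v)"
  unfolding adjoint_op_def
  by (subst bounded_linear_Blinfun_apply)
    (simp_all add: bounded_linear_compose[OF bounded_linear_inner_right blinfun.bounded_linear_right])

lemma convex_on_linear:
  fixes l :: "'a::real_vector \<Rightarrow> real"
  assumes "linear l" "convex S"
  shows "convex_on S l"
  using assms by (simp add: convex_on_def linear_add linear_scale)

lemma convex_on_linear_plus:
  fixes l :: "'a::real_vector \<Rightarrow> real"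
  assumes "linear l" "convex_on S \<phi>"
  shows "convex_on S (\<lambda>z. l (z - u) + \<phi> z - c)"
proof -
  have "convex S"
    using assms(2) by (rule convex_on_imp_convex)
  with assms have "convex_on S (\<lambda>z. (l z + \<phi> z) + (- l u - c))"
    by (intro convex_on_add convex_on_linear[OF assms(1)]) (auto simp: convex_on_const)
  then show ?thesis
    using assms(1) by (simp add: linear_diff algebra_simps)
qed

lemma clarke_dd_inequality_iff_subgradient:
  fixes j :: "'x::{real_inner,complete_space} \<Rightarrow> real" and g :: "'v::real_vector \<Rightarrow> 'x"
  assumes "locally_lipschitz j" "linear g" "convex_on K \<psi>" "K \<noteq> {}"
  shows "(\<forall>z\<in>K. 0 \<le> \<psi> z + clarke_dd j x (g z - y))
     \<longleftrightarrow> (\<exists>w\<in>clarke_subdiff j x. \<forall>z\<in>K. 0 \<le> \<psi> z + inner w (g z - y))"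
proof
  assume ineq: "\<forall>z\<in>K. 0 \<le> \<psi> z + clarke_dd j x (g z - y)"
  define G where "G = (\<lambda>e. (g (fst e) - y, snd e)) ` epigraph K \<psi>"
  have "linear (\<lambda>e. (g (fst e), snd e))"
    using assms(2) by (auto intro!: linearI simp: linear_add linear_scale)
  then have "convex ((\<lambda>e. (g (fst e), snd e)) ` epigraph K \<psi>)"
    using assms(3) by (intro convex_linear_image convex_epigraph[THEN iffD2])
  from convex_translation_subtract[OF this, of "(y, 0)"] have "convex G"
    by (simp add: G_def image_image case_prod_unfold)
  have graph_in_G: "(g z - y, \<psi> z) \<in> G" if "z \<in> K" for z
    using that by (force simp: G_def mem_epigraph intro: rev_image_eqI[of "(z, \<psi> z)"])
  then have "G \<noteq> {}"
    using assms(4) by blast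
  have above: "0 \<le> r + clarke_dd j x v" if vr: "(v, r) \<in> G" for v r
  proof -
    obtain e where e: "e \<in> epigraph K \<psi>" "(v, r) = (g (fst e) - y, snd e)"
      using vr unfolding G_def by blast
    then have "fst e \<in> K" "\<psi> (fst e) \<le> r" "v = g (fst e) - y"
      by (auto simp: epigraph_def)
    with ineq show ?thesis
      by force
  qed
  obtain L where L: "\<And>v. \<bar>clarke_dd j x v\<bar> \<le> L * norm v"
    using clarke_dd_abs_le[OF assms(1)] by blast
  have bound: "clarke_dd j x v \<le> L * norm v" for v
    by (rule abs_le_D1[OF L])
  obtain w where w_le: "\<And>v. inner w v \<le> clarke_dd j x v"
    and w_G: "\<And>v r. (v, r) \<in> G \<Longrightarrow> 0 \<le> r + inner w v"
    using sublinear_sandwich[OF sublinear_clarke_dd[OF assms(1)] bound \<open>convex G\<close> \<open>G \<noteq> {}\<close> above]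
    by blast
  have "w \<in> clarke_subdiff j x"
    using w_le by (simp add: clarke_subdiff_def)
  with w_G graph_in_G show "\<exists>w\<in>clarke_subdiff j x. \<forall>z\<in>K. 0 \<le> \<psi> z + inner w (g z - y)"
    by blast
next
  assume "\<exists>w\<in>clarke_subdiff j x. \<forall>z\<in>K. 0 \<le> \<psi> z + inner w (g z - y)"
  then obtain w where "\<And>v. inner w v \<le> clarke_dd j x v" "\<And>z. z \<in> K \<Longrightarrow> 0 \<le> \<psi> z + inner w (g z - y)"
    unfolding clarke_subdiff_def by blast
  then show "\<forall>z\<in>K. 0 \<le> \<psi> z + clarke_dd j x (g z - y)"
    by (meson add_left_mono order_trans)
qed

theorem mainTheorem4:
  fixes C :: "'v::banach set"
    and K :: "'v \<Rightarrow> 'v set"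
    and A :: "'v \<Rightarrow> ('v \<Rightarrow>\<^sub>L real)"
    and f :: "'v \<Rightarrow>\<^sub>L real"
    and \<phi> :: "'v \<Rightarrow> real"
    and M :: "'v \<Rightarrow>\<^sub>L 'x::{real_inner, complete_space}"
    and j :: "'x \<Rightarrow> real"
    and u :: 'v
  assumes "reflexive_space TYPE('v)"
    and "\<forall>x\<in>C. K x \<subseteq> C \<and> K x \<noteq> {} \<and> closed (K x) \<and> convex (K x)"
    and "convex_on UNIV \<phi>"
    and "locally_lipschitz j"
  shows "(u \<in> C \<and> u \<in> K u \<and>
           (\<forall>z\<in>K u. blinfun_apply (A u - f) (z - u) + \<phi> z - \<phi> u
                      + clarke_dd j (blinfun_apply M u) (blinfun_apply M z - blinfun_apply M u) \<ge> 0))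
     \<longleftrightarrow>
         (u \<in> C \<and> u \<in> K u \<and>
           (\<exists>w\<in>clarke_subdiff j (blinfun_apply M u).
              \<forall>z\<in>K u. blinfun_apply (A u - f) (z - u) + \<phi> z - \<phi> u
                      + blinfun_apply (adjoint_op M w) (z - u) \<ge> 0))"
proof (cases "u \<in> C \<and> u \<in> K u")
  case True
  then have K: "convex (K u)" "K u \<noteq> {}"
    using assms(2) by auto
  define \<psi> where "\<psi> = (\<lambda>z. blinfun_apply (A u - f) (z - u) + \<phi> z - \<phi> u)"
  have "convex_on (K u) \<psi>"
    unfolding \<psi>_def using convex_on_subset[OF assms(3) _ K(1)]
    by (intro convex_on_linear_plus bounded_linear.linear[OF blinfun.bounded_linear_right]) simp
  from clarke_dd_inequality_iff_subgradient[where x = "blinfun_apply M u" and y = "blinfun_apply M u",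
      OF assms(4) bounded_linear.linear[OF blinfun.bounded_linear_right[of M]] this K(2)]
  show ?thesis
    using True by (simp add: \<psi>_def adjoint_op_apply blinfun.diff_right inner_diff_right)
next
  case False
  then show ?thesis
    by blast
qed

end
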